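(* Let $G$ be a graph containing a subgraph $F$ isomorphic to $F_4$, with vertices labelled $u_0,u_1,u_2,u_3$ as described in the context and $U=\{u_1,u_2,u_3\}$, and let $T$ be a triangle of $G$ vertex-disjoint from $F$. If $e(U,V(T))\geq 7$, then $G[V(T)\cup V(F)]$ contains a triangle and a quadrilateral that are vertex-disjoint.
   Context: All graphs are finite, simple and undirected. $F_4$ denotes the graph with $4$ vertices and $4$ edges not containing a $4$-cycle, i.e. a claw (star $K_{1,3}$) with one additional edge joining two of its leaves. In a copy of $F_4$, $u_0$ denotes its unique vertex of degree $3$ in $F_4$, $u_1,u_2$ its two vertices of degree $2$ in $F_4$, and $u_3$ its unique vertex of degree $1$ in $F_4$ (so $F_4$ has edges $u_0u_1,u_0u_2,u_1u_2,u_0u_3$). For disjoint vertex sets $L,M$, $e(L,M)$ is the number of edges of $G$ between $L$ and $M$. $G[W]$ is the subgraph induced by $W$. *)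

theory Defs
  imports Main
begin

definition simple_graph :: "'a set \<Rightarrow> ('a \<Rightarrow> 'a \<Rightarrow> bool) \<Rightarrow> bool" where
  "simple_graph V E \<longleftrightarrow> finite V \<and> (\<forall>x y. E x y \<longrightarrow> E y x) \<and> (\<forall>x. \<not> E x x)
     \<and> (\<forall>x y. E x y \<longrightarrow> x \<in> V \<and> y \<in> V)"

definition e_between :: "('a \<Rightarrow> 'a \<Rightarrow> bool) \<Rightarrow> 'a set \<Rightarrow> 'a set \<Rightarrow> nat" where
  "e_between E L M = card {(x, y). x \<in> L \<and> y \<in> M \<and> E x y}"

definition is_triangle :: "'a set \<Rightarrow> ('a \<Rightarrow> 'a \<Rightarrow> bool) \<Rightarrow> 'a \<Rightarrow> 'a \<Rightarrow> 'a \<Rightarrow> bool" where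
  "is_triangle V E a b c \<longleftrightarrow> a \<in> V \<and> b \<in> V \<and> c \<in> V \<and> distinct [a, b, c]
     \<and> E a b \<and> E b c \<and> E c a"

definition is_quadrilateral :: "'a set \<Rightarrow> ('a \<Rightarrow> 'a \<Rightarrow> bool) \<Rightarrow> 'a \<Rightarrow> 'a \<Rightarrow> 'a \<Rightarrow> 'a \<Rightarrow> bool" where
  "is_quadrilateral V E a b c d \<longleftrightarrow> a \<in> V \<and> b \<in> V \<and> c \<in> V \<and> d \<in> V \<and> distinct [a, b, c, d]
     \<and> E a b \<and> E b c \<and> E c d \<and> E d a"

definition induced_edges :: "('a \<Rightarrow> 'a \<Rightarrow> bool) \<Rightarrow> 'a set \<Rightarrow> 'a \<Rightarrow> 'a \<Rightarrow> bool" where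
  "induced_edges E W x y \<longleftrightarrow> x \<in> W \<and> y \<in> W \<and> E x y"

text \<open>A copy of F_4 in (V,E) with u0 of degree 3, u1 u2 of degree 2, u3 of degree 1
  (as a subgraph, not necessarily induced).\<close>
definition is_F4 :: "'a set \<Rightarrow> ('a \<Rightarrow> 'a \<Rightarrow> bool) \<Rightarrow> 'a \<Rightarrow> 'a \<Rightarrow> 'a \<Rightarrow> 'a \<Rightarrow> bool" where
  "is_F4 V E u0 u1 u2 u3 \<longleftrightarrow> u0 \<in> V \<and> u1 \<in> V \<and> u2 \<in> V \<and> u3 \<in> V
     \<and> distinct [u0, u1, u2, u3] \<and> E u0 u1 \<and> E u0 u2 \<and> E u1 u2 \<and> E u0 u3"

end

theory Submission
  imports Defs
begin

text \<open>At most two of the nine pairs between \<open>U = {u1, u2, u3}\<close> and the triangle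
  \<open>T\<close> are non-edges. If \<open>u3\<close> has two neighbours \<open>ta, tb\<close> in \<open>T\<close>, then
  \<open>u0 u1 u2\<close> is a triangle and \<open>u3 ta tc tb\<close> a disjoint quadrilateral. Otherwise
  \<open>u3\<close> misses two vertices \<open>ta, tb\<close> of \<open>T\<close>, so every other pair is an edge;
  then \<open>u1 ta tb\<close> is a triangle and \<open>u0 u3 tc u2\<close> a disjoint quadrilateral.\<close>

definition has_disjoint_triangle_quadrilateral :: "'a set \<Rightarrow> ('a \<Rightarrow> 'a \<Rightarrow> bool) \<Rightarrow> bool" where
  "has_disjoint_triangle_quadrilateral V E \<longleftrightarrow>
     (\<exists>a b c p q r s. is_triangle V E a b c \<and> is_quadrilateral V E p q r s
        \<and> {a, b, c} \<inter> {p, q, r, s} = {})"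

lemma simple_graph_sym:
  assumes "simple_graph V E" "E x y"
  shows "E y x"
  using assms by (simp add: simple_graph_def)

lemma e_between_plus_non_edges:
  assumes "finite L" "finite M"
  shows "e_between E L M + card {(x, y). x \<in> L \<and> y \<in> M \<and> \<not> E x y} = card L * card M"
proof -
  let ?edges = "{(x, y). x \<in> L \<and> y \<in> M \<and> E x y}"
  let ?non_edges = "{(x, y). x \<in> L \<and> y \<in> M \<and> \<not> E x y}"
  have "finite ?edges" "finite ?non_edges"
    by (rule finite_subset[of _ "L \<times> M"], use assms in auto)+
  moreover have "L \<times> M = ?edges \<union> ?non_edges" "?edges \<inter> ?non_edges = {}"
    by auto
  ultimately have "card (L \<times> M) = card ?edges + card ?non_edges"
    by (simp add: card_Un_disjoint)
  then show ?thesis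
    by (simp add: e_between_def card_cartesian_product)
qed

lemma edge_unless_one_of_two_non_edges:
  assumes "finite L" "finite M"
    and few: "card {(x, y). x \<in> L \<and> y \<in> M \<and> \<not> E x y} \<le> 2"
    and "a \<in> L" "b \<in> M" "\<not> E a b" "c \<in> L" "d \<in> M" "\<not> E c d" "(a, b) \<noteq> (c, d)"
    and "x \<in> L" "y \<in> M" "(x, y) \<notin> {(a, b), (c, d)}"
  shows "E x y"
proof (rule ccontr)
  assume "\<not> E x y"
  then have "{(x, y), (a, b), (c, d)} \<subseteq> {(x, y). x \<in> L \<and> y \<in> M \<and> \<not> E x y}"
    using assms(4-9,11,12) by blast
  moreover have "finite {(x, y). x \<in> L \<and> y \<in> M \<and> \<not> E x y}"
    by (rule finite_subset[of _ "L \<times> M"]) (use assms(1,2) in auto)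
  ultimately have "card {(x, y), (a, b), (c, d)} \<le> 2"
    using few by (meson card_mono order_trans)
  moreover have "card {(x, y), (a, b), (c, d)} = 3"
    using assms(10,13) by simp
  ultimately show False
    by simp
qed

lemma is_triangle_relabel:
  assumes "simple_graph V E" "is_triangle V E t1 t2 t3"
    and "{a, b, c} = {t1, t2, t3}" "distinct [a, b, c]"
  shows "is_triangle V E a b c"
proof -
  have adj: "E x y" if "x \<in> {t1, t2, t3}" "y \<in> {t1, t2, t3}" "x \<noteq> y" for x y
    using that assms(1,2) unfolding simple_graph_def is_triangle_def by blast
  have abc: "a \<in> {t1, t2, t3}" "b \<in> {t1, t2, t3}" "c \<in> {t1, t2, t3}"
    using assms(3) by blast+
  have "{a, b, c} \<subseteq> V"
    using assms(2,3) by (simp add: is_triangle_def)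
  moreover have "a \<noteq> b" "b \<noteq> c" "c \<noteq> a"
    using assms(4) by auto
  ultimately show ?thesis
    using assms(4) adj[OF abc(1,2)] adj[OF abc(2,3)] adj[OF abc(3,1)]
    by (simp add: is_triangle_def)
qed

lemma third_vertex:
  assumes "distinct [t1, t2, t3]" "a \<in> {t1, t2, t3}" "b \<in> {t1, t2, t3}" "a \<noteq> b"
  obtains c where "{a, b, c} = {t1, t2, t3}" "distinct [a, b, c]"
proof -
  have "card ({t1, t2, t3} - {a, b}) = 1"
    using assms by (simp add: card_Diff_subset)
  then obtain c where c: "{t1, t2, t3} - {a, b} = {c}"
    using card_1_singletonE by blast
  then have "{a, b, c} = {t1, t2, t3}"
    using assms(2,3) by blast
  moreover have "distinct [a, b, c]"
    using c assms(4) by auto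
  ultimately show thesis
    using that by blast
qed

lemma F4_triangle_labelling:
  assumes "distinct [u1, u2, u3]" "distinct [t1, t2, t3]"
    and few: "card {(x, y). x \<in> {u1, u2, u3} \<and> y \<in> {t1, t2, t3} \<and> \<not> E x y} \<le> 2"
  obtains ta tb tc where "{ta, tb, tc} = {t1, t2, t3}" "distinct [ta, tb, tc]"
    "E u3 ta \<and> E u3 tb \<or> E u1 ta \<and> E u1 tb \<and> E u2 tc \<and> E u3 tc"
proof -
  have "E u3 t1 = E u3 t2 \<or> E u3 t1 = E u3 t3 \<or> E u3 t2 = E u3 t3"
    by blast
  then obtain ta tb where ab: "ta \<in> {t1, t2, t3}" "tb \<in> {t1, t2, t3}" "ta \<noteq> tb"
    and same: "E u3 ta = E u3 tb"
    using \<open>distinct [t1, t2, t3]\<close> by auto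
  obtain tc where c: "{ta, tb, tc} = {t1, t2, t3}" "distinct [ta, tb, tc]"
    using third_vertex[OF \<open>distinct [t1, t2, t3]\<close> ab] .
  have "E u1 ta \<and> E u1 tb \<and> E u2 tc \<and> E u3 tc" if "\<not> E u3 ta" "\<not> E u3 tb"
  proof -
    have edge: "E x y"
      if "x \<in> {u1, u2, u3}" "y \<in> {t1, t2, t3}" "(x, y) \<notin> {(u3, ta), (u3, tb)}" for x y
      using that ab \<open>\<not> E u3 ta\<close> \<open>\<not> E u3 tb\<close>
      by (intro edge_unless_one_of_two_non_edges[OF _ _ few, of u3 ta u3 tb]) simp_all
    have "tc \<in> {t1, t2, t3}" "tc \<noteq> ta" "tc \<noteq> tb"
      using c by auto
    then show ?thesis
      using ab assms(1) by (intro conjI edge) simp_all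
  qed
  then show thesis
    using that[OF c] same by (cases "E u3 ta") simp_all
qed

lemma has_disjoint_triangle_quadrilateral_induced:
  assumes "{a, b, c, p, q, r, s} \<subseteq> W" "distinct [a, b, c]" "distinct [p, q, r, s]"
    and "E a b" "E b c" "E c a" "E p q" "E q r" "E r s" "E s p"
    and "{a, b, c} \<inter> {p, q, r, s} = {}"
  shows "has_disjoint_triangle_quadrilateral W (induced_edges E W)"
proof -
  have "is_triangle W (induced_edges E W) a b c"
    using assms(1,2,4-6) by (simp add: is_triangle_def induced_edges_def)
  moreover have "is_quadrilateral W (induced_edges E W) p q r s"
    using assms(1,3,7-10) by (simp add: is_quadrilateral_def induced_edges_def)
  ultimately show ?thesis
    using assms(11) unfolding has_disjoint_triangle_quadrilateral_def by blast
qed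

lemma disjoint_triangle_quadrilateral_if_leaf_has_two_neighbours:
  assumes "simple_graph V E" "is_F4 V E u0 u1 u2 u3" "is_triangle V E ta tb tc"
    and "{ta, tb, tc} \<inter> {u0, u1, u2, u3} = {}"
    and "E u3 ta" "E u3 tb"
  shows "has_disjoint_triangle_quadrilateral ({ta, tb, tc} \<union> {u0, u1, u2, u3})
    (induced_edges E ({ta, tb, tc} \<union> {u0, u1, u2, u3}))"
proof (rule has_disjoint_triangle_quadrilateral_induced[of u0 u1 u2 u3 ta tc tb])
  show "E tb u3" "E ta tc" "E tc tb" "E u2 u0"
    using assms(2,3,6) by (auto simp: is_F4_def is_triangle_def intro: simple_graph_sym[OF assms(1)])
qed (use assms(2-5) in \<open>auto simp: is_F4_def is_triangle_def\<close>)

lemma disjoint_triangle_quadrilateral_if_leaf_has_one_neighbour: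
  assumes "simple_graph V E" "is_F4 V E u0 u1 u2 u3" "is_triangle V E ta tb tc"
    and "{ta, tb, tc} \<inter> {u0, u1, u2, u3} = {}"
    and "E u1 ta" "E u1 tb" "E u2 tc" "E u3 tc"
  shows "has_disjoint_triangle_quadrilateral ({ta, tb, tc} \<union> {u0, u1, u2, u3})
    (induced_edges E ({ta, tb, tc} \<union> {u0, u1, u2, u3}))"
proof (rule has_disjoint_triangle_quadrilateral_induced[of u1 ta tb u0 u3 tc u2])
  show "E tb u1" "E tc u2" "E u2 u0"
    using assms(2,6,7) by (auto simp: is_F4_def intro: simple_graph_sym[OF assms(1)])
qed (use assms(2-5,8) in \<open>auto simp: is_F4_def is_triangle_def\<close>)

theorem lemma9:
  fixes V :: "'a set" and E :: "'a \<Rightarrow> 'a \<Rightarrow> bool"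
    and u0 u1 u2 u3 t1 t2 t3 :: 'a
  assumes "simple_graph V E"
    and "is_F4 V E u0 u1 u2 u3"
    and "is_triangle V E t1 t2 t3"
    and "{t1, t2, t3} \<inter> {u0, u1, u2, u3} = {}"
    and "e_between E {u1, u2, u3} {t1, t2, t3} \<ge> 7"
  shows "\<exists>a b c p q r s.
           is_triangle ({t1, t2, t3} \<union> {u0, u1, u2, u3})
             (induced_edges E ({t1, t2, t3} \<union> {u0, u1, u2, u3})) a b c
         \<and> is_quadrilateral ({t1, t2, t3} \<union> {u0, u1, u2, u3})
             (induced_edges E ({t1, t2, t3} \<union> {u0, u1, u2, u3})) p q r s
         \<and> {a, b, c} \<inter> {p, q, r, s} = {}"
proof -
  have du: "distinct [u1, u2, u3]" and dt: "distinct [t1, t2, t3]"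
    using assms(2,3) by (auto simp: is_F4_def is_triangle_def)
  have "card {(x, y). x \<in> {u1, u2, u3} \<and> y \<in> {t1, t2, t3} \<and> \<not> E x y} \<le> 2"
    using e_between_plus_non_edges[of "{u1, u2, u3}" "{t1, t2, t3}" E] assms(5) du dt by simp
  then obtain ta tb tc where T: "{ta, tb, tc} = {t1, t2, t3}" "distinct [ta, tb, tc]"
    and leaf: "E u3 ta \<and> E u3 tb \<or> E u1 ta \<and> E u1 tb \<and> E u2 tc \<and> E u3 tc"
    by (rule F4_triangle_labelling[OF du dt])
  have "is_triangle V E ta tb tc"
    using is_triangle_relabel[OF assms(1,3) T] .
  moreover have "{ta, tb, tc} \<inter> {u0, u1, u2, u3} = {}"
    using assms(4) T(1) by simp
  ultimately have "has_disjoint_triangle_quadrilateral ({ta, tb, tc} \<union> {u0, u1, u2, u3})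
      (induced_edges E ({ta, tb, tc} \<union> {u0, u1, u2, u3}))"
    using leaf
  proof (elim disjE conjE)
    show ?thesis if "is_triangle V E ta tb tc" "{ta, tb, tc} \<inter> {u0, u1, u2, u3} = {}"
      "E u3 ta" "E u3 tb"
      using disjoint_triangle_quadrilateral_if_leaf_has_two_neighbours[OF assms(1,2) that] .
    show ?thesis if "is_triangle V E ta tb tc" "{ta, tb, tc} \<inter> {u0, u1, u2, u3} = {}"
      "E u1 ta" "E u1 tb" "E u2 tc" "E u3 tc"
      using disjoint_triangle_quadrilateral_if_leaf_has_one_neighbour[OF assms(1,2) that] .
  qed
  then show ?thesis
    unfolding T(1) has_disjoint_triangle_quadrilateral_def .
qed

end
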